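(* For every $n\ge1$ and $k\ge1$, $$h_n\!\left[\frac{1}{(1-q_1)\cdots(1-q_k)}\right]=\frac{\sum_{\sigma^1\cdots\sigma^k=\epsilon}q_1^{\mathrm{comaj}(\sigma^1)}\cdots q_k^{\mathrm{comaj}(\sigma^k)}}{(q_1;q_1)_n\cdots(q_k;q_k)_n},$$ the sum running over all $k$-tuples $(\sigma^1,\dots,\sigma^k)\in S_n^{\times k}$ whose product $\sigma^1\cdots\sigma^k$ is the identity $\epsilon$.
   Context: $h_n$ is the complete homogeneous symmetric function, evaluated at all monomials $q_1^{a_1}\cdots q_k^{a_k}$, $a\in\mathbb{N}^k$. $(q;t)_r=(1-q)(1-qt)\cdots(1-qt^{r-1})$. For $\sigma\in S_n$, $\mathrm{comaj}(\sigma)=\sum_{i:\sigma_i>\sigma_{i+1}}(n-i)$. *)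

theory Defs
  imports "HOL-Analysis.Analysis" "HOL-Library.Multiset" "HOL-Combinatorics.Permutations"
begin

definition exps :: "nat \<Rightarrow> nat list set" where
  "exps k = {a. length a = k}"

text \<open>The monomial q_1^{a_1} ... q_k^{a_k} (variables indexed 0..k-1).\<close>
definition monomial :: "(nat \<Rightarrow> real) \<Rightarrow> nat \<Rightarrow> nat list \<Rightarrow> real" where
  "monomial q k a = (\<Prod>j<k. q j ^ (a ! j))"

text \<open>h_n evaluated at the alphabet of all monomials: sum over all multisets of size n
  of exponent vectors of the product of the corresponding monomials.\<close>
definition h_index :: "nat \<Rightarrow> nat \<Rightarrow> nat list multiset set" where
  "h_index n k = {M. size M = n \<and> set_mset M \<subseteq> exps k}"

definition h_term :: "(nat \<Rightarrow> real) \<Rightarrow> nat \<Rightarrow> nat list multiset \<Rightarrow> real" where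
  "h_term q k M = prod_mset (image_mset (monomial q k) M)"

definition qpoch :: "real \<Rightarrow> real \<Rightarrow> nat \<Rightarrow> real" where
  "qpoch a t r = (\<Prod>i<r. (1 - a * t ^ i))"

definition comaj :: "nat \<Rightarrow> (nat \<Rightarrow> nat) \<Rightarrow> nat" where
  "comaj n \<sigma> = (\<Sum>i\<in>{1..<n}. if \<sigma> i > \<sigma> (Suc i) then n - i else 0)"

definition tuple_prod :: "nat \<Rightarrow> (nat \<Rightarrow> nat \<Rightarrow> nat) \<Rightarrow> nat \<Rightarrow> nat" where
  "tuple_prod k s = foldr (\<lambda>j acc. s j \<circ> acc) [0..<k] id"

definition id_tuples :: "nat \<Rightarrow> nat \<Rightarrow> (nat \<Rightarrow> nat \<Rightarrow> nat) set" where
  "id_tuples n k = {s \<in> {0..<k} \<rightarrow>\<^sub>E {\<sigma>. \<sigma> permutes {1..n}}. tuple_prod k s = id}"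

end

(*
  A multiset of n exponent vectors in N^k is a word V(1), ..., V(n) in N^k that is weakly
  increasing for the colexicographic order.  More generally, for a permutation tau of {1..n}
  consider the words whose stable sorting permutation is tau; by induction on k, their
  generating function is the sum over all factorizations tau = sigma_1 ... sigma_k of
  prod_j q_j^comaj(sigma_j) / (q_j;q_j)_n.  Removing the last coordinate c of V leaves a word R
  with some stable sorting permutation rho, and V is sorted by tau exactly when c o rho is
  sorted by rho^-1 tau, so V corresponds to the triple (rho, R, c).  The words
  c : {1..n} -> N sorted by a fixed sigma are, read along sigma, the weakly increasing
  sequences that increase strictly at the descents of sigma; their generating function is
  q^comaj(sigma) / (q;q)_n.  The case tau = id is the theorem.
*)

theory Submission
  imports Defs "HOL-Library.List_Lexorder"
begin

lemma has_sum_mult_Times: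
  fixes f :: "'a \<Rightarrow> real" and g :: "'b \<Rightarrow> real"
  assumes f: "(f has_sum a) A" and g: "(g has_sum b) B"
  shows "((\<lambda>(x, y). f x * g y) has_sum (a * b)) (A \<times> B)"
proof -
  have fs: "(\<lambda>x. norm (f x)) summable_on A" and gs: "(\<lambda>y. norm (g y)) summable_on B"
    using f g summable_on_iff_abs_summable_on_real has_sum_imp_summable by blast+
  have "(\<lambda>z. norm ((\<lambda>(x, y). f x * g y) z)) summable_on (A \<times> B)"
  proof (rule nonneg_bdd_above_summable_on)
    show "bdd_above (sum (\<lambda>z. norm ((\<lambda>(x, y). f x * g y) z)) ` {F. F \<subseteq> A \<times> B \<and> finite F})"
    proof (rule bdd_aboveI2)
      fix F assume "F \<in> {F. F \<subseteq> A \<times> B \<and> finite F}"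
      then have fin: "finite F" and sub: "F \<subseteq> A \<times> B" by auto
      have "(\<Sum>z\<in>F. norm ((\<lambda>(x, y). f x * g y) z))
          \<le> (\<Sum>z\<in>fst ` F \<times> snd ` F. norm ((\<lambda>(x, y). f x * g y) z))"
        by (rule sum_mono2) (auto simp: fin, force, metis image_iff snd_conv)
      also have "\<dots> = (\<Sum>x\<in>fst ` F. norm (f x)) * (\<Sum>y\<in>snd ` F. norm (g y))"
        by (simp add: sum_product sum.cartesian_product abs_mult case_prod_unfold)
      also have "\<dots> \<le> (\<Sum>\<^sub>\<infinity>x\<in>A. norm (f x)) * (\<Sum>\<^sub>\<infinity>y\<in>B. norm (g y))"
        using fs gs sub fin
        by (intro mult_mono finite_sum_le_infsum infsum_nonneg sum_nonneg) auto
      finally show "(\<Sum>z\<in>F. norm ((\<lambda>(x, y). f x * g y) z))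
          \<le> (\<Sum>\<^sub>\<infinity>x\<in>A. norm (f x)) * (\<Sum>\<^sub>\<infinity>y\<in>B. norm (g y))" .
    qed
  qed auto
  then have "(\<lambda>(x, y). f x * g y) summable_on (A \<times> B)"
    using abs_summable_summable by blast
  then show ?thesis
    using has_sum_cmult_right[OF g] has_sum_cmult_left[OF f]
    by (intro has_sum_SigmaI[where g = "\<lambda>x. f x * b"]) auto
qed

lemma has_sum_Sigma_finite:
  fixes f :: "'a \<times> 'b \<Rightarrow> 'c::topological_comm_monoid_add"
  assumes "finite A" and "\<And>a. a \<in> A \<Longrightarrow> ((\<lambda>y. f (a, y)) has_sum s a) (B a)"
  shows "(f has_sum (\<Sum>a\<in>A. s a)) (Sigma A B)"
  using assms
proof (induction A rule: finite_induct)
  case (insert a A)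
  have "(f has_sum s a) (Pair a ` B a)"
    using insert.prems[of a] by (subst has_sum_reindex) (auto simp: o_def inj_on_def)
  moreover have "(f has_sum (\<Sum>a\<in>A. s a)) (Sigma A B)"
    using insert by auto
  ultimately have "(f has_sum (s a + (\<Sum>a\<in>A. s a))) (Pair a ` B a \<union> Sigma A B)"
    using insert.hyps by (intro has_sum_Un_disjoint) auto
  moreover have "Sigma (insert a A) B = Pair a ` B a \<union> Sigma A B"
    by auto
  ultimately show ?case
    using insert.hyps by simp
qed simp

lemma has_sum_power_geometric:
  fixes x :: "'a::{real_normed_field, banach}"
  assumes "norm x < 1"
  shows "((\<lambda>a. x ^ a) has_sum (1 / (1 - x))) UNIV"
proof (rule norm_summable_imp_has_sum)
  show "summable (\<lambda>a. norm (x ^ a))"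
    using assms by (simp add: norm_power summable_geometric)
  show "(\<lambda>a. x ^ a) sums (1 / (1 - x))"
    using geometric_sums[of x] assms by simp
qed

section \<open>Stable sorting\<close>

definition stable_less :: "(nat \<Rightarrow> 'a::linorder) \<Rightarrow> nat \<Rightarrow> nat \<Rightarrow> bool" where
  "stable_less x p p' \<longleftrightarrow> x p < x p' \<or> (x p = x p' \<and> p < p')"

text \<open>\<open>\<sigma>\<close> lists the positions \<open>1..n\<close> so that \<open>x \<circ> \<sigma>\<close> increases weakly, ties being broken
  by position; \<open>inv \<sigma>\<close> is the standardization of the word \<open>x\<close>.\<close>

definition stably_sorts :: "nat \<Rightarrow> (nat \<Rightarrow> nat) \<Rightarrow> (nat \<Rightarrow> 'a::linorder) \<Rightarrow> bool" where
  "stably_sorts n \<sigma> x \<longleftrightarrow> (\<forall>i\<in>{1..n}. \<forall>j\<in>{1..n}. i < j \<longrightarrow> stable_less x (\<sigma> i) (\<sigma> j))"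

definition stable_rank :: "nat \<Rightarrow> (nat \<Rightarrow> 'a::linorder) \<Rightarrow> nat \<Rightarrow> nat" where
  "stable_rank n x p = Suc (card {p'\<in>{1..n}. stable_less x p' p})"

lemma stable_less_irrefl: "\<not> stable_less x p p"
  by (simp add: stable_less_def)

lemma stable_less_trans: "stable_less x p p' \<Longrightarrow> stable_less x p' p'' \<Longrightarrow> stable_less x p p''"
  by (auto simp: stable_less_def)

lemma stable_less_linear: "p \<noteq> p' \<Longrightarrow> stable_less x p p' \<or> stable_less x p' p"
  by (auto simp: stable_less_def)

lemma stable_rank_strict_mono:
  assumes "p \<in> {1..n}" "p' \<in> {1..n}" "stable_less x p p'"
  shows "stable_rank n x p < stable_rank n x p'"
proof -
  have "{p''\<in>{1..n}. stable_less x p'' p} \<subset> {p''\<in>{1..n}. stable_less x p'' p'}"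
    using assms stable_less_trans[of x _ p p'] stable_less_irrefl[of x p] by blast
  then show ?thesis
    unfolding stable_rank_def by (simp add: psubset_card_mono)
qed

lemma stable_rank_bij: "bij_betw (stable_rank n x) {1..n} {1..n}"
proof -
  have inj: "inj_on (stable_rank n x) {1..n}"
    by (intro inj_onI) (metis stable_less_linear stable_rank_strict_mono less_irrefl)
  have "card {p'\<in>{1..n}. stable_less x p' p} < n" if "p \<in> {1..n}" for p
  proof -
    have "card {p'\<in>{1..n}. stable_less x p' p} \<le> card ({1..n} - {p})"
      by (intro card_mono) (auto simp: stable_less_irrefl)
    moreover have "card ({1..n} - {p}) = n - 1"
      using that by simp
    ultimately show ?thesis
      using that by auto
  qed
  then have "stable_rank n x ` {1..n} \<subseteq> {1..n}"
    by (auto simp: stable_rank_def Suc_le_eq)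
  with inj show ?thesis
    by (simp add: bij_betw_def card_subset_eq card_image)
qed

lemma stably_sortsD:
  "stably_sorts n \<sigma> x \<Longrightarrow> i \<in> {1..n} \<Longrightarrow> j \<in> {1..n} \<Longrightarrow> i < j \<Longrightarrow> stable_less x (\<sigma> i) (\<sigma> j)"
  by (simp add: stably_sorts_def)

lemma stable_rank_of_sorting:
  assumes \<sigma>: "\<sigma> permutes {1..n}" and sorts: "stably_sorts n \<sigma> x" and i: "i \<in> {1..n}"
  shows "stable_rank n x (\<sigma> i) = i"
proof -
  have "{p\<in>{1..n}. stable_less x p (\<sigma> i)} = \<sigma> ` {1..<i}"
  proof (intro equalityI subsetI)
    fix p assume p: "p \<in> {p\<in>{1..n}. stable_less x p (\<sigma> i)}"
    then obtain j where j: "j \<in> {1..n}" "p = \<sigma> j"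
      using permutes_image[OF \<sigma>] by (metis (no_types, lifting) imageE mem_Collect_eq)
    have "j < i"
    proof (rule ccontr)
      assume "\<not> j < i"
      then have "j = i \<or> stable_less x (\<sigma> i) (\<sigma> j)"
        using stably_sortsD[OF sorts i j(1)] by linarith
      with p j(2) show False
        using stable_less_irrefl stable_less_trans by blast
    qed
    with j show "p \<in> \<sigma> ` {1..<i}" by auto
  next
    fix p assume "p \<in> \<sigma> ` {1..<i}"
    then obtain j where j: "j \<in> {1..<i}" "p = \<sigma> j"
      by blast
    with i have "j \<in> {1..n}"
      by simp
    then have "\<sigma> j \<in> {1..n}"
      using permutes_in_image[OF \<sigma>] by blast
    with j i show "p \<in> {p\<in>{1..n}. stable_less x p (\<sigma> i)}"
      using stably_sortsD[OF sorts \<open>j \<in> {1..n}\<close> i] by simp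
  qed
  moreover have "card (\<sigma> ` {1..<i}) = i - 1"
    using permutes_inj_on[OF \<sigma>] by (simp add: card_image)
  ultimately show ?thesis
    using i by (simp add: stable_rank_def)
qed

lemma stably_sorts_unique:
  assumes "\<sigma> permutes {1..n}" "stably_sorts n \<sigma> x" "\<sigma>' permutes {1..n}" "stably_sorts n \<sigma>' x"
  shows "\<sigma> = \<sigma>'"
proof
  fix i
  show "\<sigma> i = \<sigma>' i"
  proof (cases "i \<in> {1..n}")
    case True
    then have "stable_rank n x (\<sigma> i) = stable_rank n x (\<sigma>' i)"
      using assms stable_rank_of_sorting by metis
    moreover have "\<sigma> i \<in> {1..n}" "\<sigma>' i \<in> {1..n}"
      by (simp_all only: permutes_in_image[OF assms(1)] permutes_in_image[OF assms(3)] True)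
    ultimately show ?thesis
      by (rule inj_onD[OF bij_betw_imp_inj_on[OF stable_rank_bij]])
  qed (use assms(1,3) permutes_not_in in metis)
qed

lemma stably_sorts_exists: "\<exists>\<sigma>. \<sigma> permutes {1..n} \<and> stably_sorts n \<sigma> x"
proof -
  define r where "r p = (if p \<in> {1..n} then stable_rank n x p else p)" for p
  have "bij_betw r {1..n} {1..n}"
    using stable_rank_bij[of n x] by (subst bij_betw_cong[where g = "stable_rank n x"]) (auto simp: r_def)
  then have r: "r permutes {1..n}"
    by (rule bij_imp_permutes) (auto simp: r_def)
  have "stably_sorts n (inv r) x"
    unfolding stably_sorts_def
  proof (intro ballI impI)
    fix i j assume ij: "i \<in> {1..n}" "j \<in> {1..n}" "i < j"
    then have "inv r i \<in> {1..n}" "inv r j \<in> {1..n}"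
      using permutes_in_image[OF permutes_inv[OF r]] by blast+
    moreover have "r (inv r i) < r (inv r j)"
      using ij by (simp add: permutes_inverses(1)[OF r])
    moreover have "inv r i \<noteq> inv r j"
      using calculation(3) by auto
    ultimately show "stable_less x (inv r i) (inv r j)"
      using stable_less_linear stable_rank_strict_mono by (fastforce simp: r_def)
  qed
  then show ?thesis
    using permutes_inv[OF r] by blast
qed

lemma stably_sorts_iff_consecutive:
  "stably_sorts n \<sigma> x \<longleftrightarrow> (\<forall>i\<in>{1..<n}. stable_less x (\<sigma> i) (\<sigma> (Suc i)))"
proof
  assume step: "\<forall>i\<in>{1..<n}. stable_less x (\<sigma> i) (\<sigma> (Suc i))"
  have "stable_less x (\<sigma> i) (\<sigma> j)" if "1 \<le> i" "i < j" "j \<le> n" for i j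
    using that
  proof (induction j)
    case (Suc j)
    then have "stable_less x (\<sigma> j) (\<sigma> (Suc j))"
      using step by simp
    with Suc show ?case
      using stable_less_trans by (cases "i = j") auto
  qed simp
  then show "stably_sorts n \<sigma> x"
    by (simp add: stably_sorts_def)
qed (simp add: stably_sorts_def)

lemma stably_sorts_cong:
  assumes \<sigma>: "\<sigma> permutes {1..n}" and xy: "\<And>p. p \<in> {1..n} \<Longrightarrow> x p = y p"
  shows "stably_sorts n \<sigma> x \<longleftrightarrow> stably_sorts n \<sigma> y"
proof -
  have "stable_less x (\<sigma> i) (\<sigma> j) \<longleftrightarrow> stable_less y (\<sigma> i) (\<sigma> j)" if "i \<in> {1..n}" "j \<in> {1..n}" for i j
    using that xy[of "\<sigma> i"] xy[of "\<sigma> j"] permutes_in_image[OF \<sigma>] by (simp add: stable_less_def)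
  then show ?thesis
    by (simp add: stably_sorts_def)
qed

lemma stably_sorts_const_iff:
  assumes "\<tau> permutes {1..n}"
  shows "stably_sorts n \<tau> (\<lambda>_. a) \<longleftrightarrow> \<tau> = id"
proof -
  have "stably_sorts n id (\<lambda>_. a)"
    by (simp add: stably_sorts_def stable_less_def)
  then show ?thesis
    using stably_sorts_unique[OF assms _ permutes_id] by blast
qed

lemma stably_sorts_id_iff_sorted: "stably_sorts n id x \<longleftrightarrow> sorted (map x [1..<Suc n])"
proof -
  have "stably_sorts n id x \<longleftrightarrow> (\<forall>i\<in>{1..n}. \<forall>j\<in>{1..n}. i < j \<longrightarrow> x i \<le> x j)"
    by (auto simp: stably_sorts_def stable_less_def le_less)
  also have "\<dots> \<longleftrightarrow> (\<forall>i j. i < j \<longrightarrow> j < n \<longrightarrow> x (Suc i) \<le> x (Suc j))"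
  proof (intro iffI allI impI ballI)
    fix i j assume "\<forall>i\<in>{1..n}. \<forall>j\<in>{1..n}. i < j \<longrightarrow> x i \<le> x j" "i < j" "j < n"
    then show "x (Suc i) \<le> x (Suc j)"
      by simp
  next
    fix i j assume mono: "\<forall>i j. i < j \<longrightarrow> j < n \<longrightarrow> x (Suc i) \<le> x (Suc j)"
      and ij: "i \<in> {1..n}" "j \<in> {1..n}" "i < j"
    then obtain i' j' where "i = Suc i'" "j = Suc j'"
      by (metis atLeastAtMost_iff not0_implies_Suc not_one_le_zero)
    with mono ij show "x i \<le> x j"
      by simp
  qed
  also have "\<dots> \<longleftrightarrow> sorted (map x [1..<Suc n])"
    by (simp add: sorted_iff_nth_mono_less nth_upt del: upt_Suc)
  finally show ?thesis .
qed

definition stable_sorting_perm :: "nat \<Rightarrow> (nat \<Rightarrow> 'a::linorder) \<Rightarrow> nat \<Rightarrow> nat" where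
  "stable_sorting_perm n x = (THE \<sigma>. \<sigma> permutes {1..n} \<and> stably_sorts n \<sigma> x)"

lemma stable_sorting_perm:
  "stable_sorting_perm n x permutes {1..n}" "stably_sorts n (stable_sorting_perm n x) x"
proof -
  have "\<exists>!\<sigma>. \<sigma> permutes {1..n} \<and> stably_sorts n \<sigma> x"
    using stably_sorts_exists stably_sorts_unique by blast
  then have "stable_sorting_perm n x permutes {1..n} \<and> stably_sorts n (stable_sorting_perm n x) x"
    unfolding stable_sorting_perm_def by (rule theI')
  then show "stable_sorting_perm n x permutes {1..n}" "stably_sorts n (stable_sorting_perm n x) x"
    by simp_all
qed

lemma stable_sorting_perm_eqI:
  "\<sigma> permutes {1..n} \<Longrightarrow> stably_sorts n \<sigma> x \<Longrightarrow> stable_sorting_perm n x = \<sigma>"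
  using stable_sorting_perm stably_sorts_unique by blast

section \<open>Sequences with prescribed gaps\<close>

definition gapped_seqs :: "nat \<Rightarrow> (nat \<Rightarrow> nat) \<Rightarrow> (nat \<Rightarrow> nat) set" where
  "gapped_seqs n d = {u \<in> {..<n} \<rightarrow>\<^sub>E UNIV. \<forall>i. Suc i < n \<longrightarrow> u i + d i \<le> u (Suc i)}"

lemma gapped_seqs_mono:
  assumes "u \<in> gapped_seqs n d" "i \<le> j" "j < n"
  shows "u i \<le> u j"
  using assms(2,3)
proof (induction j)
  case (Suc j)
  moreover have "u j + d j \<le> u (Suc j)"
    using assms(1) Suc.prems(2) by (simp add: gapped_seqs_def)
  ultimately show ?case
    by (cases "i = Suc j") auto
qed simp

lemma gapped_seqs_head_le:
  assumes u: "u \<in> gapped_seqs (Suc n) d" and "i < n"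
  shows "u 0 + d 0 \<le> u (Suc i)"
  using u gapped_seqs_mono[OF u, of "Suc 0" "Suc i"] \<open>i < n\<close> by (force simp: gapped_seqs_def)

lemma gapped_seqs_Suc_bij:
  "bij_betw (\<lambda>u. (u 0, \<lambda>i\<in>{..<n}. u (Suc i) - (u 0 + d 0)))
     (gapped_seqs (Suc n) d) (UNIV \<times> gapped_seqs n (d \<circ> Suc))"
proof (rule bij_betw_byWitness[where f' = "\<lambda>(a, v). \<lambda>j\<in>{..<Suc n}.
    if j = 0 then a else v (j - 1) + (a + d 0)"])
  show "\<forall>u\<in>gapped_seqs (Suc n) d. (\<lambda>(a, v). \<lambda>j\<in>{..<Suc n}. if j = 0 then a else v (j - 1) + (a + d 0))
      (u 0, \<lambda>i\<in>{..<n}. u (Suc i) - (u 0 + d 0)) = u"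
    using gapped_seqs_head_le[of _ n d] by (fastforce simp: gapped_seqs_def PiE_def extensional_def gr0_conv_Suc)
  show "(\<lambda>u. (u 0, \<lambda>i\<in>{..<n}. u (Suc i) - (u 0 + d 0))) ` gapped_seqs (Suc n) d
      \<subseteq> UNIV \<times> gapped_seqs n (d \<circ> Suc)"
    using gapped_seqs_head_le[of _ n d] by (fastforce simp: gapped_seqs_def)
  show "\<forall>b\<in>UNIV \<times> gapped_seqs n (d \<circ> Suc). (\<lambda>u. (u 0, \<lambda>i\<in>{..<n}. u (Suc i) - (u 0 + d 0)))
      ((\<lambda>(a, v). \<lambda>j\<in>{..<Suc n}. if j = 0 then a else v (j - 1) + (a + d 0)) b) = b"
    by (fastforce simp: gapped_seqs_def PiE_def extensional_def)
  show "(\<lambda>(a, v). \<lambda>j\<in>{..<Suc n}. if j = 0 then a else v (j - 1) + (a + d 0)) `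
      (UNIV \<times> gapped_seqs n (d \<circ> Suc)) \<subseteq> gapped_seqs (Suc n) d"
    by (fastforce simp: gapped_seqs_def gr0_conv_Suc nat.split)
qed

lemma sum_gapped_seqs_Suc:
  assumes u: "u \<in> gapped_seqs (Suc n) d"
  shows "(\<Sum>i<Suc n. u i) = Suc n * u 0 + n * d 0 + (\<Sum>i<n. u (Suc i) - (u 0 + d 0))"
proof -
  have "(\<Sum>i<Suc n. u i) = u 0 + (\<Sum>i<n. u (Suc i))"
    by (rule sum.lessThan_Suc_shift)
  also have "(\<Sum>i<n. u (Suc i)) = (\<Sum>i<n. (u (Suc i) - (u 0 + d 0)) + (u 0 + d 0))"
    using gapped_seqs_head_le[OF u] by (intro sum.cong) auto
  also have "\<dots> = (\<Sum>i<n. u (Suc i) - (u 0 + d 0)) + n * (u 0 + d 0)"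
    by (simp add: sum.distrib)
  finally show ?thesis
    by (simp add: algebra_simps)
qed

lemma has_sum_gapped_seqs_Suc:
  fixes q :: real
  assumes S: "((\<lambda>v. q ^ (\<Sum>i<n. v i)) has_sum S) (gapped_seqs n (d \<circ> Suc))" and q: "\<bar>q\<bar> < 1"
  shows "((\<lambda>u. q ^ (\<Sum>i<Suc n. u i)) has_sum (q ^ (n * d 0) * S / (1 - q ^ Suc n)))
    (gapped_seqs (Suc n) d)"
proof -
  have "\<bar>q ^ Suc n\<bar> \<le> \<bar>q\<bar>"
    using q by (simp add: power_abs abs_mult mult_left_le power_le_one)
  with q have "((\<lambda>a. (q ^ Suc n) ^ a) has_sum (1 / (1 - q ^ Suc n))) UNIV"
    by (intro has_sum_power_geometric) simp
  then have "((\<lambda>a. q ^ (Suc n * a)) has_sum (1 / (1 - q ^ Suc n))) UNIV"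
    by (simp only: power_mult)
  moreover have "((\<lambda>v. q ^ (n * d 0) * q ^ (\<Sum>i<n. v i)) has_sum (q ^ (n * d 0) * S))
      (gapped_seqs n (d \<circ> Suc))"
    by (rule has_sum_cmult_right[OF S])
  ultimately have "((\<lambda>(a, v). q ^ (Suc n * a) * (q ^ (n * d 0) * q ^ (\<Sum>i<n. v i))) has_sum
      (q ^ (n * d 0) * S / (1 - q ^ Suc n))) (UNIV \<times> gapped_seqs n (d \<circ> Suc))"
    using has_sum_mult_Times by fastforce
  then have reindexed: "((\<lambda>u. q ^ (Suc n * u 0) * (q ^ (n * d 0) * q ^ (\<Sum>i<n. u (Suc i) - (u 0 + d 0))))
      has_sum (q ^ (n * d 0) * S / (1 - q ^ Suc n))) (gapped_seqs (Suc n) d)"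
    unfolding has_sum_reindex_bij_betw[OF gapped_seqs_Suc_bij, symmetric] by simp
  have weight: "q ^ (\<Sum>i<Suc n. u i)
      = q ^ (Suc n * u 0) * (q ^ (n * d 0) * q ^ (\<Sum>i<n. u (Suc i) - (u 0 + d 0)))"
    if "u \<in> gapped_seqs (Suc n) d" for u
    unfolding sum_gapped_seqs_Suc[OF that] power_add by (simp only: mult.assoc)
  show ?thesis
    using reindexed by (rule has_sum_cong[THEN iffD2, rotated]) (rule weight)
qed

text \<open>Subtracting the forced gaps leaves a weakly increasing sequence, and the gap \<open>d i\<close> is
  carried by the \<open>n - Suc i\<close> entries after position \<open>i\<close>; this explains the numerator.\<close>

lemma has_sum_gapped_seqs:
  fixes q :: real
  assumes q: "\<bar>q\<bar> < 1"
  shows "((\<lambda>u. q ^ (\<Sum>i<n. u i)) has_sum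
           (q ^ (\<Sum>i<n. d i * (n - Suc i)) / (\<Prod>i<n. 1 - q ^ Suc i))) (gapped_seqs n d)"
proof (induction n arbitrary: d)
  case 0
  have "gapped_seqs 0 d = {\<lambda>_. undefined}"
    by (auto simp: gapped_seqs_def)
  then show ?case
    by (simp add: has_sum_finiteI)
next
  case (Suc n)
  define E where "E = (\<Sum>i<n. d (Suc i) * (n - Suc i))"
  define P where "P = (\<Prod>i<n. 1 - q ^ Suc i)"
  have "((\<lambda>u. q ^ (\<Sum>i<Suc n. u i)) has_sum (q ^ (n * d 0) * (q ^ E / P) / (1 - q ^ Suc n)))
      (gapped_seqs (Suc n) d)"
    using Suc.IH[of "d \<circ> Suc"] q by (intro has_sum_gapped_seqs_Suc) (simp_all add: E_def P_def o_def)
  moreover have "q ^ (n * d 0) * (q ^ E / P) / (1 - q ^ Suc n)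
      = q ^ (\<Sum>i<Suc n. d i * (Suc n - Suc i)) / (\<Prod>i<Suc n. 1 - q ^ Suc i)"
  proof -
    have exponent: "(\<Sum>i<Suc n. d i * (Suc n - Suc i)) = n * d 0 + E"
      unfolding sum.lessThan_Suc_shift by (simp add: E_def)
    have denominator: "(\<Prod>i<Suc n. 1 - q ^ Suc i) = P * (1 - q ^ Suc n)"
      by (simp add: P_def del: power_Suc)
    show ?thesis
      unfolding exponent denominator power_add by simp
  qed
  ultimately show ?case
    by (simp only:)
qed

section \<open>Words sorted by a permutation\<close>

definition words_sorted_by :: "nat \<Rightarrow> (nat \<Rightarrow> nat) \<Rightarrow> (nat \<Rightarrow> nat) set" where
  "words_sorted_by n \<sigma> = {c \<in> {1..n} \<rightarrow>\<^sub>E UNIV. stably_sorts n \<sigma> c}"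

lemma comaj_eq_sum_descents:
  "comaj n \<sigma> = (\<Sum>i<n. of_bool (\<sigma> (Suc (Suc i)) < \<sigma> (Suc i)) * (n - Suc i))"
proof -
  have "comaj n \<sigma> = (\<Sum>i\<in>{1..n}. if \<sigma> (Suc i) < \<sigma> i then n - i else 0)"
    unfolding comaj_def by (rule sum.mono_neutral_left) auto
  also have "\<dots> = (\<Sum>i<n. if \<sigma> (Suc (Suc i)) < \<sigma> (Suc i) then n - Suc i else 0)"
    by (simp only: One_nat_def sum.atLeast1_atMost_eq)
  also have "\<dots> = (\<Sum>i<n. of_bool (\<sigma> (Suc (Suc i)) < \<sigma> (Suc i)) * (n - Suc i))"
    by (rule sum.cong) auto
  finally show ?thesis .
qed

lemma stable_less_nat_iff:
  fixes c :: "nat \<Rightarrow> nat"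
  assumes "p \<noteq> p'"
  shows "stable_less c p p' \<longleftrightarrow> c p + of_bool (p' < p) \<le> c p'"
  using assms by (auto simp: stable_less_def)

lemma stably_sorts_iff_gaps:
  fixes c :: "nat \<Rightarrow> nat"
  assumes "inj \<sigma>"
  shows "stably_sorts n \<sigma> c \<longleftrightarrow> (\<forall>i. Suc i < n \<longrightarrow>
    c (\<sigma> (Suc i)) + of_bool (\<sigma> (Suc (Suc i)) < \<sigma> (Suc i)) \<le> c (\<sigma> (Suc (Suc i))))"
proof -
  have "\<sigma> i \<noteq> \<sigma> (Suc i)" for i
    using assms by (metis injD n_not_Suc_n)
  moreover have "(\<forall>i\<in>{1..<n}. P i) \<longleftrightarrow> (\<forall>i. Suc i < n \<longrightarrow> P (Suc i))" for P
  proof (intro iffI allI impI ballI)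
    fix i assume "\<forall>i. Suc i < n \<longrightarrow> P (Suc i)" "i \<in> {1..<n}"
    then show "P i"
      by (cases i) auto
  qed simp
  ultimately show ?thesis
    by (simp add: stably_sorts_iff_consecutive stable_less_nat_iff)
qed

lemma words_sorted_by_bij_gapped_seqs:
  assumes \<sigma>: "\<sigma> permutes {1..n}"
  shows "bij_betw (\<lambda>c. \<lambda>i\<in>{..<n}. c (\<sigma> (Suc i)))
    (words_sorted_by n \<sigma>) (gapped_seqs n (\<lambda>i. of_bool (\<sigma> (Suc (Suc i)) < \<sigma> (Suc i))))"
    (is "bij_betw ?f _ _")
proof (rule bij_betw_byWitness[where f' = "\<lambda>u. \<lambda>p\<in>{1..n}. u (inv \<sigma> p - 1)"])
  have in_range: "\<sigma> p \<in> {1..n} \<longleftrightarrow> p \<in> {1..n}" "inv \<sigma> p \<in> {1..n} \<longleftrightarrow> p \<in> {1..n}" for p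
    using permutes_in_image[OF \<sigma>] permutes_in_image[OF permutes_inv[OF \<sigma>]] by blast+
  have at_\<sigma>: "(\<lambda>p\<in>{1..n}. u (inv \<sigma> p - 1)) (\<sigma> (Suc i)) = u i" if "i < n" for u :: "nat \<Rightarrow> nat" and i
    using that in_range(1)[of "Suc i"] by (simp add: permutes_inverses(2)[OF \<sigma>])
  have at_inv: "?f c (inv \<sigma> p - 1) = c p" if "p \<in> {1..n}" for c :: "nat \<Rightarrow> nat" and p
  proof -
    have "inv \<sigma> p - 1 < n" "Suc (inv \<sigma> p - 1) = inv \<sigma> p"
      using that in_range(2)[of p] by auto
    then show ?thesis
      by (simp add: permutes_inverses(1)[OF \<sigma>])
  qed
  show "\<forall>c\<in>words_sorted_by n \<sigma>. (\<lambda>p\<in>{1..n}. ?f c (inv \<sigma> p - 1)) = c"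
  proof (intro ballI ext)
    fix c p assume "c \<in> words_sorted_by n \<sigma>"
    then have "c \<in> {1..n} \<rightarrow>\<^sub>E UNIV"
      by (simp add: words_sorted_by_def)
    with at_inv show "(\<lambda>p\<in>{1..n}. ?f c (inv \<sigma> p - 1)) p = c p"
      using PiE_arb[of c "{1..n}" _ p] by (cases "p \<in> {1..n}") simp_all
  qed
  show "\<forall>u\<in>gapped_seqs n (\<lambda>i. of_bool (\<sigma> (Suc (Suc i)) < \<sigma> (Suc i))).
      ?f (\<lambda>p\<in>{1..n}. u (inv \<sigma> p - 1)) = u"
  proof (intro ballI ext)
    fix u i assume "u \<in> gapped_seqs n (\<lambda>i. of_bool (\<sigma> (Suc (Suc i)) < \<sigma> (Suc i)))"
    then have "u \<in> {..<n} \<rightarrow>\<^sub>E UNIV"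
      by (simp add: gapped_seqs_def)
    with at_\<sigma> show "?f (\<lambda>p\<in>{1..n}. u (inv \<sigma> p - 1)) i = u i"
      using PiE_arb[of u "{..<n}" _ i] by (cases "i < n") simp_all
  qed
  show "?f ` words_sorted_by n \<sigma> \<subseteq> gapped_seqs n (\<lambda>i. of_bool (\<sigma> (Suc (Suc i)) < \<sigma> (Suc i)))"
  proof (rule image_subsetI)
    fix c assume "c \<in> words_sorted_by n \<sigma>"
    then have "stably_sorts n \<sigma> c"
      by (simp add: words_sorted_by_def)
    then show "?f c \<in> gapped_seqs n (\<lambda>i. of_bool (\<sigma> (Suc (Suc i)) < \<sigma> (Suc i)))"
      by (simp add: gapped_seqs_def stably_sorts_iff_gaps[OF permutes_inj[OF \<sigma>]])
  qed
  show "(\<lambda>u. \<lambda>p\<in>{1..n}. u (inv \<sigma> p - 1)) ` gapped_seqs n (\<lambda>i. of_bool (\<sigma> (Suc (Suc i)) < \<sigma> (Suc i)))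
      \<subseteq> words_sorted_by n \<sigma>"
  proof (rule image_subsetI)
    fix u assume "u \<in> gapped_seqs n (\<lambda>i. of_bool (\<sigma> (Suc (Suc i)) < \<sigma> (Suc i)))"
    then have "stably_sorts n \<sigma> (\<lambda>p\<in>{1..n}. u (inv \<sigma> p - 1))"
      unfolding stably_sorts_iff_gaps[OF permutes_inj[OF \<sigma>]] gapped_seqs_def
      using at_\<sigma> by (simp del: restrict_apply)
    then show "(\<lambda>p\<in>{1..n}. u (inv \<sigma> p - 1)) \<in> words_sorted_by n \<sigma>"
      by (simp add: words_sorted_by_def)
  qed
qed

lemma has_sum_words_sorted_by:
  fixes q :: real
  assumes q: "\<bar>q\<bar> < 1" and \<sigma>: "\<sigma> permutes {1..n}"
  shows "((\<lambda>c. q ^ (\<Sum>p\<in>{1..n}. c p)) has_sum (q ^ comaj n \<sigma> / qpoch q q n)) (words_sorted_by n \<sigma>)"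
proof -
  have "((\<lambda>u. q ^ (\<Sum>i<n. u i)) has_sum (q ^ comaj n \<sigma> / qpoch q q n))
      (gapped_seqs n (\<lambda>i. of_bool (\<sigma> (Suc (Suc i)) < \<sigma> (Suc i))))"
    using has_sum_gapped_seqs[OF q] unfolding comaj_eq_sum_descents qpoch_def by (simp only: power_Suc)
  then have "((\<lambda>c. q ^ (\<Sum>i<n. (\<lambda>i\<in>{..<n}. c (\<sigma> (Suc i))) i)) has_sum (q ^ comaj n \<sigma> / qpoch q q n))
      (words_sorted_by n \<sigma>)"
    unfolding has_sum_reindex_bij_betw[OF words_sorted_by_bij_gapped_seqs[OF \<sigma>], symmetric] .
  moreover have "(\<Sum>i<n. (\<lambda>i\<in>{..<n}. c (\<sigma> (Suc i))) i) = (\<Sum>p\<in>{1..n}. c p)" for c :: "nat \<Rightarrow> nat"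
  proof -
    have "(\<Sum>i<n. (\<lambda>i\<in>{..<n}. c (\<sigma> (Suc i))) i) = (\<Sum>p\<in>{1..n}. c (\<sigma> p))"
      by (simp add: sum.atLeast1_atMost_eq)
    also have "\<dots> = (\<Sum>p\<in>{1..n}. c p)"
      using sum.permute[OF \<sigma>, of c] by (simp add: o_def)
    finally show ?thesis .
  qed
  ultimately show ?thesis
    by simp
qed

section \<open>Factorizations of a permutation\<close>

lemma tuple_prod_0: "tuple_prod 0 s = id"
  by (simp add: tuple_prod_def)

lemma tuple_prod_Suc: "tuple_prod (Suc k) s = tuple_prod k s \<circ> s k"
proof -
  have "foldr (\<lambda>j acc. s j \<circ> acc) xs f = foldr (\<lambda>j acc. s j \<circ> acc) xs id \<circ> f" for xs f
    by (induction xs) (simp_all add: o_assoc)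
  then show ?thesis
    by (simp add: tuple_prod_def)
qed

lemma tuple_prod_cong: "(\<And>j. j < k \<Longrightarrow> s j = s' j) \<Longrightarrow> tuple_prod k s = tuple_prod k s'"
  by (induction k) (simp_all add: tuple_prod_0 tuple_prod_Suc)

lemma tuple_prod_permutes: "(\<And>j. j < k \<Longrightarrow> s j permutes S) \<Longrightarrow> tuple_prod k s permutes S"
  by (induction k) (simp_all add: tuple_prod_0 tuple_prod_Suc permutes_id permutes_compose)

definition perms :: "nat \<Rightarrow> (nat \<Rightarrow> nat) set" where
  "perms n = {\<sigma>. \<sigma> permutes {1..n}}"

definition factorizations :: "nat \<Rightarrow> nat \<Rightarrow> (nat \<Rightarrow> nat) \<Rightarrow> (nat \<Rightarrow> nat \<Rightarrow> nat) set" where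
  "factorizations n k \<tau> = {s \<in> {0..<k} \<rightarrow>\<^sub>E perms n. tuple_prod k s = \<tau>}"

definition comaj_sum :: "(nat \<Rightarrow> real) \<Rightarrow> nat \<Rightarrow> nat \<Rightarrow> (nat \<Rightarrow> nat) \<Rightarrow> real" where
  "comaj_sum q n k \<tau> = (\<Sum>s\<in>factorizations n k \<tau>. \<Prod>j<k. q j ^ comaj n (s j))"

lemma finite_perms: "finite (perms n)"
  by (simp add: perms_def finite_permutations)

lemma finite_factorizations: "finite (factorizations n k \<tau>)"
proof (rule finite_subset)
  show "factorizations n k \<tau> \<subseteq> {0..<k} \<rightarrow>\<^sub>E perms n"
    by (auto simp: factorizations_def)
qed (simp add: finite_PiE finite_perms)

lemma factorizations_Suc_last:
  assumes s: "s \<in> factorizations n (Suc k) \<tau>"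
  shows "s k = inv (tuple_prod k s) \<circ> \<tau>"
proof -
  have \<rho>: "tuple_prod k s permutes {1..n}"
    using s by (intro tuple_prod_permutes) (auto simp: factorizations_def perms_def)
  have "\<tau> = tuple_prod k s \<circ> s k"
    using s by (simp add: factorizations_def tuple_prod_Suc)
  then have "inv (tuple_prod k s) \<circ> \<tau> = (inv (tuple_prod k s) \<circ> tuple_prod k s) \<circ> s k"
    by (simp add: o_assoc)
  then show ?thesis
    by (simp add: permutes_inv_o(2)[OF \<rho>])
qed

lemma factorizations_Suc_bij:
  assumes \<tau>: "\<tau> permutes {1..n}"
  shows "bij_betw (\<lambda>s. (tuple_prod k s, restrict s {0..<k}))
    (factorizations n (Suc k) \<tau>) (SIGMA \<rho>:perms n. factorizations n k \<rho>)"
proof (rule bij_betw_byWitness[where f' = "\<lambda>(\<rho>, s). s(k := inv \<rho> \<circ> \<tau>)"])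
  show "\<forall>s\<in>factorizations n (Suc k) \<tau>.
      (\<lambda>(\<rho>, s). s(k := inv \<rho> \<circ> \<tau>)) (tuple_prod k s, restrict s {0..<k}) = s"
  proof
    fix s assume s: "s \<in> factorizations n (Suc k) \<tau>"
    then have last: "s k = inv (tuple_prod k s) \<circ> \<tau>"
      by (rule factorizations_Suc_last)
    have "s \<in> {0..<Suc k} \<rightarrow>\<^sub>E perms n"
      using s by (simp add: factorizations_def)
    with last show "(\<lambda>(\<rho>, s). s(k := inv \<rho> \<circ> \<tau>)) (tuple_prod k s, restrict s {0..<k}) = s"
      using PiE_arb[of s "{0..<Suc k}" "\<lambda>_. perms n"] by (auto simp: restrict_def)
  qed
  show "\<forall>b\<in>SIGMA \<rho>:perms n. factorizations n k \<rho>.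
      (\<lambda>s. (tuple_prod k s, restrict s {0..<k})) ((\<lambda>(\<rho>, s). s(k := inv \<rho> \<circ> \<tau>)) b) = b"
  proof
    fix b assume "b \<in> (SIGMA \<rho>:perms n. factorizations n k \<rho>)"
    then obtain \<rho> s where b: "b = (\<rho>, s)" and "s \<in> factorizations n k \<rho>"
      by blast
    then have s: "s \<in> {0..<k} \<rightarrow>\<^sub>E perms n" "tuple_prod k s = \<rho>"
      by (simp_all add: factorizations_def)
    have "tuple_prod k (s(k := inv \<rho> \<circ> \<tau>)) = \<rho>"
      using s(2) tuple_prod_cong[of k "s(k := inv \<rho> \<circ> \<tau>)" s] by simp
    moreover have "restrict (s(k := inv \<rho> \<circ> \<tau>)) {0..<k} = s"
      using PiE_arb[OF s(1)] by (auto simp: restrict_def)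
    ultimately show "(\<lambda>s. (tuple_prod k s, restrict s {0..<k})) ((\<lambda>(\<rho>, s). s(k := inv \<rho> \<circ> \<tau>)) b) = b"
      by (simp add: b)
  qed
  show "(\<lambda>s. (tuple_prod k s, restrict s {0..<k})) ` factorizations n (Suc k) \<tau>
      \<subseteq> (SIGMA \<rho>:perms n. factorizations n k \<rho>)"
  proof (rule image_subsetI)
    fix s assume s: "s \<in> factorizations n (Suc k) \<tau>"
    then have "tuple_prod k s \<in> perms n"
      unfolding perms_def by (intro CollectI tuple_prod_permutes) (auto simp: factorizations_def perms_def)
    moreover have "tuple_prod k (restrict s {0..<k}) = tuple_prod k s"
      by (rule tuple_prod_cong) simp
    ultimately show "(tuple_prod k s, restrict s {0..<k}) \<in> (SIGMA \<rho>:perms n. factorizations n k \<rho>)"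
      using s by (auto simp: factorizations_def)
  qed
  show "(\<lambda>(\<rho>, s). s(k := inv \<rho> \<circ> \<tau>)) ` (SIGMA \<rho>:perms n. factorizations n k \<rho>)
      \<subseteq> factorizations n (Suc k) \<tau>"
  proof (rule image_subsetI)
    fix b assume "b \<in> (SIGMA \<rho>:perms n. factorizations n k \<rho>)"
    then obtain \<rho> s where b: "b = (\<rho>, s)" and \<rho>: "\<rho> \<in> perms n" and s: "s \<in> factorizations n k \<rho>"
      by blast
    then have "inv \<rho> \<circ> \<tau> \<in> perms n"
      using \<tau> by (simp add: perms_def permutes_compose permutes_inv)
    moreover have "tuple_prod k (s(k := inv \<rho> \<circ> \<tau>)) = \<rho>"
      using s tuple_prod_cong[of k "s(k := inv \<rho> \<circ> \<tau>)" s] by (simp add: factorizations_def)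
    moreover have "\<rho> \<circ> (inv \<rho> \<circ> \<tau>) = \<tau>"
      using \<rho> by (simp add: perms_def o_assoc permutes_inv_o(1))
    ultimately show "(\<lambda>(\<rho>, s). s(k := inv \<rho> \<circ> \<tau>)) b \<in> factorizations n (Suc k) \<tau>"
      using s unfolding b by (auto simp: factorizations_def tuple_prod_Suc PiE_def extensional_def)
  qed
qed

lemma comaj_sum_Suc:
  assumes \<tau>: "\<tau> permutes {1..n}"
  shows "comaj_sum q n (Suc k) \<tau> = (\<Sum>\<rho>\<in>perms n. comaj_sum q n k \<rho> * q k ^ comaj n (inv \<rho> \<circ> \<tau>))"
proof -
  define w where "w = (\<lambda>(\<rho>, s). (\<Prod>j<k. q j ^ comaj n (s j)) * q k ^ comaj n (inv \<rho> \<circ> \<tau>))"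
  have "(\<Sum>\<rho>\<in>perms n. comaj_sum q n k \<rho> * q k ^ comaj n (inv \<rho> \<circ> \<tau>))
      = sum w (SIGMA \<rho>:perms n. factorizations n k \<rho>)"
    by (simp add: sum.Sigma[symmetric] finite_perms finite_factorizations comaj_sum_def
        sum_distrib_right w_def)
  also have "\<dots> = (\<Sum>s\<in>factorizations n (Suc k) \<tau>. w (tuple_prod k s, restrict s {0..<k}))"
    by (rule sum.reindex_bij_betw[OF factorizations_Suc_bij[OF \<tau>], symmetric])
  also have "\<dots> = comaj_sum q n (Suc k) \<tau>"
    unfolding comaj_sum_def
  proof (rule sum.cong)
    fix s assume "s \<in> factorizations n (Suc k) \<tau>"
    from factorizations_Suc_last[OF this]
    show "w (tuple_prod k s, restrict s {0..<k}) = (\<Prod>j<Suc k. q j ^ comaj n (s j))"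
      by (simp add: w_def)
  qed simp
  finally show ?thesis ..
qed

lemma comaj_sum_0: "comaj_sum q n 0 \<tau> = of_bool (\<tau> = id)"
proof -
  have "factorizations n 0 \<tau> = (if \<tau> = id then {\<lambda>_. undefined} else {})"
    by (auto simp: factorizations_def tuple_prod_0)
  then show ?thesis
    by (simp add: comaj_sum_def)
qed

section \<open>Vector words\<close>

text \<open>Exponent vectors are compared colexicographically (through \<open>rev\<close>), so the last
  coordinate is the most significant one; this is what lets the induction on \<open>k\<close> split it off.\<close>

definition vector_words_sorted_by :: "nat \<Rightarrow> nat \<Rightarrow> (nat \<Rightarrow> nat) \<Rightarrow> (nat \<Rightarrow> nat list) set" where
  "vector_words_sorted_by n k \<tau> = {V \<in> {1..n} \<rightarrow>\<^sub>E exps k. stably_sorts n \<tau> (\<lambda>i. rev (V i))}"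

definition word_weight :: "(nat \<Rightarrow> real) \<Rightarrow> nat \<Rightarrow> nat \<Rightarrow> (nat \<Rightarrow> nat list) \<Rightarrow> real" where
  "word_weight q n k V = (\<Prod>i\<in>{1..n}. monomial q k (V i))"

definition split_last_coord ::
    "nat \<Rightarrow> (nat \<Rightarrow> nat list) \<Rightarrow> (nat \<Rightarrow> nat) \<times> (nat \<Rightarrow> nat list) \<times> (nat \<Rightarrow> nat)" where
  "split_last_coord n V =
    (let R = (\<lambda>i\<in>{1..n}. butlast (V i)); \<rho> = stable_sorting_perm n (\<lambda>i. rev (R i))
     in (\<rho>, R, \<lambda>m\<in>{1..n}. last (V (\<rho> m))))"

definition append_last_coord ::
    "nat \<Rightarrow> (nat \<Rightarrow> nat) \<times> (nat \<Rightarrow> nat list) \<times> (nat \<Rightarrow> nat) \<Rightarrow> nat \<Rightarrow> nat list" where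
  "append_last_coord n = (\<lambda>(\<rho>, R, c). \<lambda>i\<in>{1..n}. R i @ [c (inv \<rho> i)])"

lemma monomial_snoc:
  assumes "length a = k"
  shows "monomial q (Suc k) (a @ [c]) = monomial q k a * q k ^ c"
proof -
  have "monomial q k a = (\<Prod>j<k. q j ^ ((a @ [c]) ! j))"
    unfolding monomial_def using assms by (intro prod.cong) (auto simp: nth_append)
  moreover have "(a @ [c]) ! k = c"
    using nth_append_length[of a c] by (simp add: assms)
  ultimately show ?thesis
    by (simp add: monomial_def)
qed

lemma stably_sorts_snoc:
  fixes R V :: "nat \<Rightarrow> nat list" and c :: "nat \<Rightarrow> nat"
  assumes \<rho>: "stably_sorts n \<rho> (\<lambda>i. rev (R i))"
    and \<sigma>: "\<sigma> permutes {1..n}" "stably_sorts n \<sigma> c"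
    and V: "\<And>m. m \<in> {1..n} \<Longrightarrow> V (\<rho> m) = R (\<rho> m) @ [c m]"
  shows "stably_sorts n (\<rho> \<circ> \<sigma>) (\<lambda>i. rev (V i))"
  unfolding stably_sorts_def
proof (intro ballI impI)
  fix i j assume ij: "i \<in> {1..n}" "j \<in> {1..n}" "i < j"
  then have m: "\<sigma> i \<in> {1..n}" "\<sigma> j \<in> {1..n}"
    using permutes_in_image[OF \<sigma>(1)] by blast+
  have "stable_less c (\<sigma> i) (\<sigma> j)"
    using stably_sortsD[OF \<sigma>(2) ij] .
  moreover have "stable_less (\<lambda>i. rev (R i)) (\<rho> (\<sigma> i)) (\<rho> (\<sigma> j))" if "\<sigma> i < \<sigma> j"
    using stably_sortsD[OF \<rho> m that] .
  ultimately show "stable_less (\<lambda>i. rev (V i)) ((\<rho> \<circ> \<sigma>) i) ((\<rho> \<circ> \<sigma>) j)"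
    using V[OF m(1)] V[OF m(2)] by (auto simp: stable_less_def)
qed

lemma split_last_coord_in:
  assumes \<tau>: "\<tau> permutes {1..n}" and V: "V \<in> vector_words_sorted_by n (Suc k) \<tau>"
  shows "split_last_coord n V
    \<in> (SIGMA \<rho>:perms n. vector_words_sorted_by n k \<rho> \<times> words_sorted_by n (inv \<rho> \<circ> \<tau>))"
proof -
  define R where "R = (\<lambda>i\<in>{1..n}. butlast (V i))"
  define \<rho> where "\<rho> = stable_sorting_perm n (\<lambda>i. rev (R i))"
  define c where "c = (\<lambda>m\<in>{1..n}. last (V (\<rho> m)))"
  have \<rho>: "\<rho> permutes {1..n}" "stably_sorts n \<rho> (\<lambda>i. rev (R i))"
    unfolding \<rho>_def by (rule stable_sorting_perm)+
  have len: "length (V i) = Suc k" if "i \<in> {1..n}" for i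
    using V that by (auto simp: vector_words_sorted_by_def exps_def)
  obtain \<sigma> where \<sigma>: "\<sigma> permutes {1..n}" "stably_sorts n \<sigma> c"
    using stably_sorts_exists by blast
  have "V (\<rho> m) = R (\<rho> m) @ [c m]" if "m \<in> {1..n}" for m
  proof -
    have "\<rho> m \<in> {1..n}"
      using that permutes_in_image[OF \<rho>(1)] by blast
    with that len show ?thesis
      by (simp add: R_def c_def append_butlast_last_id[symmetric] flip: length_greater_0_conv)
  qed
  then have "stably_sorts n (\<rho> \<circ> \<sigma>) (\<lambda>i. rev (V i))"
    by (rule stably_sorts_snoc[OF \<rho>(2) \<sigma>])
  moreover have "stably_sorts n \<tau> (\<lambda>i. rev (V i))"
    using V by (simp add: vector_words_sorted_by_def)
  ultimately have "\<rho> \<circ> \<sigma> = \<tau>"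
    by (rule stably_sorts_unique[OF permutes_compose[OF \<sigma>(1) \<rho>(1)] _ \<tau>])
  then have "inv \<rho> \<circ> \<tau> = (inv \<rho> \<circ> \<rho>) \<circ> \<sigma>"
    by (simp flip: o_assoc)
  then have "\<sigma> = inv \<rho> \<circ> \<tau>"
    by (simp add: permutes_inv_o(2)[OF \<rho>(1)])
  moreover have "R \<in> vector_words_sorted_by n k \<rho>"
    using \<rho>(2) len by (auto simp: vector_words_sorted_by_def R_def exps_def)
  moreover have "split_last_coord n V = (\<rho>, R, c)"
    by (simp add: split_last_coord_def Let_def R_def \<rho>_def c_def)
  ultimately show ?thesis
    using \<rho>(1) \<sigma>(2) by (simp add: perms_def words_sorted_by_def c_def)
qed

lemma append_last_coord_in:
  assumes \<tau>: "\<tau> permutes {1..n}" and "x \<in> (SIGMA \<rho>:perms n. vector_words_sorted_by n k \<rho> \<times> words_sorted_by n (inv \<rho> \<circ> \<tau>))"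
  shows "append_last_coord n x \<in> vector_words_sorted_by n (Suc k) \<tau>"
proof -
  obtain \<rho> R c where x: "x = (\<rho>, R, c)" and \<rho>: "\<rho> permutes {1..n}"
    and R: "R \<in> vector_words_sorted_by n k \<rho>" and c: "c \<in> words_sorted_by n (inv \<rho> \<circ> \<tau>)"
    using assms by (auto simp: perms_def)
  define V where "V = append_last_coord n x"
  have \<sigma>: "inv \<rho> \<circ> \<tau> permutes {1..n}"
    by (intro permutes_compose permutes_inv \<rho> \<tau>)
  have "V (\<rho> m) = R (\<rho> m) @ [c m]" if "m \<in> {1..n}" for m
    using that permutes_in_image[OF \<rho>, of m]
    by (simp add: V_def x append_last_coord_def permutes_inverses(2)[OF \<rho>])
  then have "stably_sorts n (\<rho> \<circ> (inv \<rho> \<circ> \<tau>)) (\<lambda>i. rev (V i))"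
    using R c \<sigma> by (intro stably_sorts_snoc) (auto simp: vector_words_sorted_by_def words_sorted_by_def)
  moreover have "\<rho> \<circ> (inv \<rho> \<circ> \<tau>) = \<tau>"
    by (simp add: o_assoc permutes_inv_o(1)[OF \<rho>])
  moreover have "V \<in> {1..n} \<rightarrow>\<^sub>E exps (Suc k)"
    using R by (auto simp: V_def x append_last_coord_def vector_words_sorted_by_def exps_def)
  ultimately show ?thesis
    by (simp add: vector_words_sorted_by_def V_def)
qed

lemma append_split_last_coord:
  assumes V: "V \<in> vector_words_sorted_by n (Suc k) \<tau>"
  shows "append_last_coord n (split_last_coord n V) = V"
proof
  fix i
  define R where "R = (\<lambda>i\<in>{1..n}. butlast (V i))"
  define \<rho> where "\<rho> = stable_sorting_perm n (\<lambda>i. rev (R i))"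
  have split: "split_last_coord n V = (\<rho>, R, \<lambda>m\<in>{1..n}. last (V (\<rho> m)))"
    by (simp add: split_last_coord_def Let_def R_def \<rho>_def)
  have \<rho>: "\<rho> permutes {1..n}"
    unfolding \<rho>_def by (rule stable_sorting_perm)
  have V': "V \<in> {1..n} \<rightarrow>\<^sub>E exps (Suc k)"
    using V by (simp add: vector_words_sorted_by_def)
  show "append_last_coord n (split_last_coord n V) i = V i"
  proof (cases "i \<in> {1..n}")
    case True
    moreover have "V i \<noteq> []"
      using PiE_mem[OF V' True] by (auto simp: exps_def)
    moreover have "inv \<rho> i \<in> {1..n}"
      using True permutes_in_image[OF permutes_inv[OF \<rho>]] by blast
    ultimately show ?thesis
      by (simp add: split append_last_coord_def R_def permutes_inverses(1)[OF \<rho>])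
  next
    case False
    with PiE_arb[OF V' False] show ?thesis
      by (auto simp: split append_last_coord_def)
  qed
qed

lemma split_append_last_coord:
  assumes "x \<in> (SIGMA \<rho>:perms n. vector_words_sorted_by n k \<rho> \<times> words_sorted_by n (inv \<rho> \<circ> \<tau>))"
  shows "split_last_coord n (append_last_coord n x) = x"
proof -
  obtain \<rho> R c where x: "x = (\<rho>, R, c)" and \<rho>: "\<rho> permutes {1..n}"
    and R: "R \<in> vector_words_sorted_by n k \<rho>" and c: "c \<in> words_sorted_by n (inv \<rho> \<circ> \<tau>)"
    using assms by (auto simp: perms_def)
  have R': "R \<in> {1..n} \<rightarrow>\<^sub>E exps k"
    using R by (simp add: vector_words_sorted_by_def)
  have c': "c \<in> {1..n} \<rightarrow>\<^sub>E UNIV"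
    using c by (simp add: words_sorted_by_def)
  have init: "(\<lambda>i\<in>{1..n}. butlast (append_last_coord n x i)) = R"
  proof
    fix i
    show "(\<lambda>i\<in>{1..n}. butlast (append_last_coord n x i)) i = R i"
      using PiE_arb[OF R', of i] by (simp add: append_last_coord_def x)
  qed
  have perm: "stable_sorting_perm n (\<lambda>i. rev (R i)) = \<rho>"
    using R \<rho> by (intro stable_sorting_perm_eqI) (simp_all add: vector_words_sorted_by_def)
  have "(\<lambda>m\<in>{1..n}. last (append_last_coord n x (\<rho> m))) = c"
  proof
    fix m
    show "(\<lambda>m\<in>{1..n}. last (append_last_coord n x (\<rho> m))) m = c m"
      using PiE_arb[OF c', of m] permutes_in_image[OF \<rho>, of m]
      by (simp add: append_last_coord_def x permutes_inverses(2)[OF \<rho>])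
  qed
  with init perm show ?thesis
    by (simp add: split_last_coord_def Let_def x)
qed

lemma append_last_coord_bij:
  assumes \<tau>: "\<tau> permutes {1..n}"
  shows "bij_betw (append_last_coord n)
    (SIGMA \<rho>:perms n. vector_words_sorted_by n k \<rho> \<times> words_sorted_by n (inv \<rho> \<circ> \<tau>))
    (vector_words_sorted_by n (Suc k) \<tau>)"
proof (rule bij_betw_byWitness[where f' = "split_last_coord n"])
  show "\<forall>x\<in>SIGMA \<rho>:perms n. vector_words_sorted_by n k \<rho> \<times> words_sorted_by n (inv \<rho> \<circ> \<tau>).
      split_last_coord n (append_last_coord n x) = x"
    using split_append_last_coord by blast
  show "\<forall>V\<in>vector_words_sorted_by n (Suc k) \<tau>. append_last_coord n (split_last_coord n V) = V"
    using append_split_last_coord by blast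
  show "append_last_coord n ` (SIGMA \<rho>:perms n. vector_words_sorted_by n k \<rho> \<times> words_sorted_by n (inv \<rho> \<circ> \<tau>))
      \<subseteq> vector_words_sorted_by n (Suc k) \<tau>"
    using append_last_coord_in[OF \<tau>] by blast
  show "split_last_coord n ` vector_words_sorted_by n (Suc k) \<tau>
      \<subseteq> (SIGMA \<rho>:perms n. vector_words_sorted_by n k \<rho> \<times> words_sorted_by n (inv \<rho> \<circ> \<tau>))"
    using split_last_coord_in[OF \<tau>] by blast
qed

lemma word_weight_append_last_coord:
  assumes R: "R \<in> {1..n} \<rightarrow>\<^sub>E exps k" and \<rho>: "\<rho> permutes {1..n}"
  shows "word_weight q n (Suc k) (append_last_coord n (\<rho>, R, c))
    = word_weight q n k R * q k ^ (\<Sum>p\<in>{1..n}. c p)"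
proof -
  have "word_weight q n (Suc k) (append_last_coord n (\<rho>, R, c))
      = (\<Prod>i\<in>{1..n}. monomial q k (R i) * q k ^ c (inv \<rho> i))"
    unfolding word_weight_def
  proof (rule prod.cong)
    fix i assume i: "i \<in> {1..n}"
    with PiE_mem[OF R i] show "monomial q (Suc k) (append_last_coord n (\<rho>, R, c) i)
        = monomial q k (R i) * q k ^ c (inv \<rho> i)"
      by (simp add: append_last_coord_def monomial_snoc exps_def)
  qed simp
  also have "\<dots> = word_weight q n k R * q k ^ (\<Sum>i\<in>{1..n}. c (inv \<rho> i))"
    by (simp add: word_weight_def prod.distrib power_sum)
  also have "(\<Sum>i\<in>{1..n}. c (inv \<rho> i)) = (\<Sum>p\<in>{1..n}. c p)"
    using sum.permute[OF permutes_inv[OF \<rho>], of c] by (simp add: o_def)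
  finally show ?thesis .
qed

lemma vector_words_sorted_by_0:
  assumes "\<tau> permutes {1..n}"
  shows "vector_words_sorted_by n 0 \<tau> = (if \<tau> = id then {\<lambda>i\<in>{1..n}. []} else {})"
proof -
  have "stably_sorts n \<tau> (\<lambda>i. rev ((\<lambda>i\<in>{1..n}. [] :: nat list) i)) \<longleftrightarrow> stably_sorts n \<tau> (\<lambda>_. [] :: nat list)"
    by (rule stably_sorts_cong[OF assms]) simp
  also have "\<dots> \<longleftrightarrow> \<tau> = id"
    by (rule stably_sorts_const_iff[OF assms])
  finally have "stably_sorts n \<tau> (\<lambda>i. rev ((\<lambda>i\<in>{1..n}. [] :: nat list) i)) \<longleftrightarrow> \<tau> = id" .
  moreover have "{1..n} \<rightarrow>\<^sub>E exps 0 = {\<lambda>i\<in>{1..n}. []}"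
    by (simp add: exps_def PiE_eq_singleton)
  ultimately show ?thesis
    by (auto simp: vector_words_sorted_by_def)
qed

lemma has_sum_vector_words_sorted_by_Suc:
  fixes q :: "nat \<Rightarrow> real" and F :: "(nat \<Rightarrow> nat) \<Rightarrow> real"
  assumes IH: "\<And>\<rho>. \<rho> permutes {1..n} \<Longrightarrow> (word_weight q n k has_sum F \<rho>) (vector_words_sorted_by n k \<rho>)"
    and q: "\<bar>q k\<bar> < 1" and \<tau>: "\<tau> permutes {1..n}"
  shows "(word_weight q n (Suc k) has_sum
      (\<Sum>\<rho>\<in>perms n. F \<rho> * (q k ^ comaj n (inv \<rho> \<circ> \<tau>) / qpoch (q k) (q k) n)))
    (vector_words_sorted_by n (Suc k) \<tau>)"
    (is "(_ has_sum ?S) _")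
proof -
  define T where "T = (SIGMA \<rho>:perms n. vector_words_sorted_by n k \<rho> \<times> words_sorted_by n (inv \<rho> \<circ> \<tau>))"
  have split_sum: "((\<lambda>(\<rho>, R, c). word_weight q n k R * q k ^ (\<Sum>p\<in>{1..n}. c p)) has_sum ?S) T"
    unfolding T_def
  proof (rule has_sum_Sigma_finite[OF finite_perms])
    fix \<rho> assume "\<rho> \<in> perms n"
    then have \<rho>: "\<rho> permutes {1..n}"
      by (simp add: perms_def)
    then have "inv \<rho> \<circ> \<tau> permutes {1..n}"
      by (intro permutes_compose permutes_inv \<tau>)
    with IH[OF \<rho>] has_sum_words_sorted_by[OF q]
    show "((\<lambda>y. (\<lambda>(\<rho>, R, c). word_weight q n k R * q k ^ (\<Sum>p\<in>{1..n}. c p)) (\<rho>, y)) has_sum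
        F \<rho> * (q k ^ comaj n (inv \<rho> \<circ> \<tau>) / qpoch (q k) (q k) n))
        (vector_words_sorted_by n k \<rho> \<times> words_sorted_by n (inv \<rho> \<circ> \<tau>))"
      using has_sum_mult_Times by fastforce
  qed
  have weight: "word_weight q n (Suc k) (append_last_coord n x)
      = (\<lambda>(\<rho>, R, c). word_weight q n k R * q k ^ (\<Sum>p\<in>{1..n}. c p)) x" if "x \<in> T" for x
    using that by (auto simp: T_def perms_def vector_words_sorted_by_def word_weight_append_last_coord)
  have "((\<lambda>x. word_weight q n (Suc k) (append_last_coord n x)) has_sum ?S) T"
    using split_sum has_sum_cong[of T "\<lambda>x. word_weight q n (Suc k) (append_last_coord n x)"] weight
    by blast
  then show ?thesis
    unfolding T_def has_sum_reindex_bij_betw[OF append_last_coord_bij[OF \<tau>]] .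
qed

lemma has_sum_vector_words_sorted_by:
  fixes q :: "nat \<Rightarrow> real"
  assumes "\<And>j. j < k \<Longrightarrow> \<bar>q j\<bar> < 1" and "\<tau> permutes {1..n}"
  shows "(word_weight q n k has_sum comaj_sum q n k \<tau> / (\<Prod>j<k. qpoch (q j) (q j) n))
    (vector_words_sorted_by n k \<tau>)"
  using assms
proof (induction k arbitrary: \<tau>)
  case 0
  then show ?case
    by (simp add: vector_words_sorted_by_0 comaj_sum_0 word_weight_def monomial_def has_sum_finiteI)
next
  case (Suc k)
  then have "(word_weight q n (Suc k) has_sum
      (\<Sum>\<rho>\<in>perms n. comaj_sum q n k \<rho> / (\<Prod>j<k. qpoch (q j) (q j) n)
        * (q k ^ comaj n (inv \<rho> \<circ> \<tau>) / qpoch (q k) (q k) n)))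
      (vector_words_sorted_by n (Suc k) \<tau>)"
    by (intro has_sum_vector_words_sorted_by_Suc) auto
  moreover have "(\<Sum>\<rho>\<in>perms n. comaj_sum q n k \<rho> / (\<Prod>j<k. qpoch (q j) (q j) n)
        * (q k ^ comaj n (inv \<rho> \<circ> \<tau>) / qpoch (q k) (q k) n))
      = comaj_sum q n (Suc k) \<tau> / (\<Prod>j<Suc k. qpoch (q j) (q j) n)"
    by (simp add: comaj_sum_Suc[OF Suc.prems(2)] sum_divide_distrib)
  ultimately show ?case
    by simp
qed

section \<open>Multisets of exponent vectors\<close>

lemma sorted_map_rev_unique:
  fixes xs ys :: "'a::linorder list list"
  assumes "mset xs = mset ys" "sorted (map rev xs)" "sorted (map rev ys)"
  shows "xs = ys"
proof -
  have "sort_key rev xs = ys" "sort_key rev xs = xs"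
    using assms by (auto intro: sort_key_inj_key_eq simp: inj_on_def)
  then show ?thesis
    by simp
qed

definition multiset_of_word :: "nat \<Rightarrow> (nat \<Rightarrow> nat list) \<Rightarrow> nat list multiset" where
  "multiset_of_word n V = image_mset V (mset_set {1..n})"

lemma mset_map_upt_eq_multiset_of_word: "mset (map V [1..<Suc n]) = multiset_of_word n V"
  by (simp add: multiset_of_word_def atLeastLessThanSuc_atLeastAtMost flip: mset_set_set del: upt_Suc)

lemma inj_on_multiset_of_word: "inj_on (multiset_of_word n) (vector_words_sorted_by n k id)"
proof (rule inj_onI)
  fix V V' assume V: "V \<in> vector_words_sorted_by n k id" and V': "V' \<in> vector_words_sorted_by n k id"
    and eq: "multiset_of_word n V = multiset_of_word n V'"
  have "map V [1..<Suc n] = map V' [1..<Suc n]"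
    using V V' eq by (intro sorted_map_rev_unique)
      (simp_all add: vector_words_sorted_by_def stably_sorts_id_iff_sorted o_def
        flip: mset_map_upt_eq_multiset_of_word)
  then have "V i = V' i" if "i \<in> {1..n}" for i
    using that by (simp del: upt_Suc add: map_eq_conv)
  with V V' show "V = V'"
    unfolding vector_words_sorted_by_def by (blast intro: PiE_ext)
qed

lemma multiset_of_word_surj:
  assumes M: "M \<in> h_index n k"
  shows "M \<in> multiset_of_word n ` vector_words_sorted_by n k id"
proof -
  define ys where "ys = sort_key rev (sorted_list_of_multiset M)"
  define V where "V = (\<lambda>i\<in>{1..n}. ys ! (i - 1))"
  have ys: "mset ys = M" "length ys = n" "sorted (map rev ys)"
    using M by (simp_all add: ys_def h_index_def flip: size_mset)
  have list: "map V [1..<Suc n] = ys"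
    using ys(2) by (intro nth_equalityI) (simp_all del: upt_Suc add: V_def nth_upt)
  have "V \<in> {1..n} \<rightarrow>\<^sub>E exps k"
  proof -
    have "ys ! (i - 1) \<in> set ys" if "i \<in> {1..n}" for i
      using that ys(2) by auto
    moreover have "set ys \<subseteq> exps k"
      using M ys(1) by (auto simp: h_index_def)
    ultimately show ?thesis
      by (auto simp: V_def)
  qed
  moreover have "map (\<lambda>i. rev (V i)) [1..<Suc n] = map rev ys"
    unfolding list[symmetric] by (simp only: map_map o_def)
  with ys(3) have "stably_sorts n id (\<lambda>i. rev (V i))"
    by (simp only: stably_sorts_id_iff_sorted)
  ultimately have "V \<in> vector_words_sorted_by n k id"
    by (simp add: vector_words_sorted_by_def)
  moreover have "multiset_of_word n V = M"
    using list ys(1) by (simp flip: mset_map_upt_eq_multiset_of_word)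
  ultimately show ?thesis
    by blast
qed

lemma multiset_of_word_bij: "bij_betw (multiset_of_word n) (vector_words_sorted_by n k id) (h_index n k)"
proof -
  have "multiset_of_word n ` vector_words_sorted_by n k id \<subseteq> h_index n k"
    by (auto simp: vector_words_sorted_by_def h_index_def multiset_of_word_def)
  with multiset_of_word_surj show ?thesis
    unfolding bij_betw_def using inj_on_multiset_of_word by blast
qed

lemma h_term_multiset_of_word: "h_term q k (multiset_of_word n V) = word_weight q n k V"
  by (simp add: h_term_def multiset_of_word_def word_weight_def image_mset.compositionality o_def
      prod_unfold_prod_mset)

theorem theorem11:
  fixes n k :: nat and q :: "nat \<Rightarrow> real"
  assumes "n \<ge> 1" and "k \<ge> 1" and "\<And>j. j < k \<Longrightarrow> \<bar>q j\<bar> < 1"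
  shows "(h_term q k has_sum
           ((\<Sum>s\<in>id_tuples n k. \<Prod>j<k. q j ^ comaj n (s j))
            / (\<Prod>j<k. qpoch (q j) (q j) n))) (h_index n k)"
  \<comment> \<open>The identity also holds for \<open>n = 0\<close> and \<open>k = 0\<close>.\<close>
proof -
  have "comaj_sum q n k id = (\<Sum>s\<in>id_tuples n k. \<Prod>j<k. q j ^ comaj n (s j))"
    by (simp add: comaj_sum_def factorizations_def id_tuples_def perms_def)
  moreover have "((\<lambda>V. h_term q k (multiset_of_word n V)) has_sum
      comaj_sum q n k id / (\<Prod>j<k. qpoch (q j) (q j) n)) (vector_words_sorted_by n k id)"
    using has_sum_vector_words_sorted_by[OF assms(3) permutes_id] by (simp add: h_term_multiset_of_word)
  ultimately show ?thesis
    unfolding has_sum_reindex_bij_betw[OF multiset_of_word_bij] by simp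
qed

end
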